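(* Let $s\geq 2$ be an integer. Among the complete graphs $K_m$ with $m\geq s+2$, there are exactly $s-1$ for which there exists a function $g:A\to B$ with $|g(A)|=s$ and $fix(K_m)=fix(F_{K_m})$; namely these are $K_{s+2},K_{s+3},\dots,K_{2s}$.
   Context: A set $S\subseteq V(H)$ is a fixing set of a graph $H$ if the only automorphism of $H$ fixing every vertex of $S$ is the identity; $fix(H)$ is the minimum cardinality of a fixing set of $H$. Functigraph: let $G_1,G_2$ be disjoint copies of a connected graph $G$, with $A=V(G_1)$, $B=V(G_2)$, and let $g:A\to B$ be a function. The functigraph $F_G$ has vertex set $A\cup B$ and edge set $E(G_1)\cup E(G_2)\cup\{ug(u):u\in A\}$. *)

theory Defs
  imports Main
begin

text \<open>Automorphisms are bijections of V preserving adjacency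
and non-adjacency; two automorphisms are identified if they agree on V.\<close>

definition automorphism :: "'a set \<Rightarrow> ('a \<Rightarrow> 'a \<Rightarrow> bool) \<Rightarrow> ('a \<Rightarrow> 'a) \<Rightarrow> bool" where
  "automorphism V E \<sigma> \<longleftrightarrow> bij_betw \<sigma> V V \<and>
     (\<forall>x\<in>V. \<forall>y\<in>V. E x y \<longleftrightarrow> E (\<sigma> x) (\<sigma> y))"

definition fixing_set :: "'a set \<Rightarrow> ('a \<Rightarrow> 'a \<Rightarrow> bool) \<Rightarrow> 'a set \<Rightarrow> bool" where
  "fixing_set V E S \<longleftrightarrow> S \<subseteq> V \<and>
     (\<forall>\<sigma>. automorphism V E \<sigma> \<and> (\<forall>x\<in>S. \<sigma> x = x) \<longrightarrow> (\<forall>x\<in>V. \<sigma> x = x))"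

definition fix_number :: "'a set \<Rightarrow> ('a \<Rightarrow> 'a \<Rightarrow> bool) \<Rightarrow> nat" where
  "fix_number V E = (LEAST n. \<exists>S. fixing_set V E S \<and> card S = n)"

definition K_verts :: "nat \<Rightarrow> nat set" where
  "K_verts m = {0..<m}"

definition K_edge :: "nat \<Rightarrow> nat \<Rightarrow> bool" where
  "K_edge x y \<longleftrightarrow> x \<noteq> y"

text \<open>Functigraph of (V,E) with respect to g : A \<rightarrow> B, where A = Inl ` V is
the first copy and B = Inr ` V the second copy; g is given as a map V \<rightarrow> V
(Inl x is sent to Inr (g x)).\<close>

definition fg_verts :: "'a set \<Rightarrow> ('a + 'a) set" where
  "fg_verts V = Inl ` V \<union> Inr ` V"

fun fg_edge :: "('a \<Rightarrow> 'a \<Rightarrow> bool) \<Rightarrow> ('a \<Rightarrow> 'a) \<Rightarrow> 'a + 'a \<Rightarrow> 'a + 'a \<Rightarrow> bool" where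
  "fg_edge E g (Inl x) (Inl y) = E x y"
| "fg_edge E g (Inr x) (Inr y) = E x y"
| "fg_edge E g (Inl x) (Inr y) = (y = g x)"
| "fg_edge E g (Inr y) (Inl x) = (y = g x)"

end

(*
  In the functigraph of K_m with |g(V)| = s, three kinds of transpositions are automorphisms:
  swapping two vertices of the first copy with the same image, swapping two non-image vertices
  of the second copy, and swapping two vertices with singleton fibres together with their
  images.  A fixing set must break all of them, which gives the lower bound
  (m - s) + (m - s - 1) + (#singleton fibres - 1); since fix(K_m) = m - 1 this forces m <= 2s.
  For m = s + p with 2 <= p <= s an explicit g attains m - 1, and a fixing set of that size
  exists because an automorphism fixing a non-image vertex of the second copy preserves both
  copies and is then determined by its action on images.
*)

theory Submission
  imports Defs "HOL-Combinatorics.Transposition"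
begin

lemma fix_number_eqI:
  assumes "fixing_set V E S" "card S = n" "\<And>T. fixing_set V E T \<Longrightarrow> n \<le> card T"
  shows "fix_number V E = n"
  unfolding fix_number_def by (rule Least_equality) (use assms in auto)

lemma fix_number_geI:
  assumes "\<And>S. fixing_set V E S \<Longrightarrow> n \<le> card S"
  shows "n \<le> fix_number V E"
proof -
  have "\<exists>S. fixing_set V E S \<and> card S = fix_number V E"
    unfolding fix_number_def by (rule LeastI_ex) (auto simp: fixing_set_def)
  then show ?thesis using assms by force
qed

lemma inj_on_fixes_all_but_one:
  assumes inj: "inj_on f A" and maps: "f ` A \<subseteq> A" and fixed: "\<And>x. x \<in> A \<Longrightarrow> x \<noteq> a \<Longrightarrow> f x = x"
  shows "\<forall>x\<in>A. f x = x"
proof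
  fix x assume x: "x \<in> A"
  show "f x = x"
  proof (rule ccontr)
    assume moved: "f x \<noteq> x"
    then have "x = a" using fixed x by blast
    have "f x \<in> A" using maps x by blast
    moreover have "f x \<noteq> a" using moved \<open>x = a\<close> by simp
    ultimately have "f (f x) = f x" by (rule fixed)
    then show False using inj_onD[OF inj _ \<open>f x \<in> A\<close> x] moved by blast
  qed
qed

lemma card_Int_add_card_Int_le:
  assumes "finite A" "B \<inter> C = {}"
  shows "card (A \<inter> B) + card (A \<inter> C) \<le> card A"
proof -
  have "card (A \<inter> B) + card (A \<inter> C) = card (A \<inter> B \<union> A \<inter> C)"
    using assms by (intro card_Un_disjoint[symmetric]) auto
  also have "\<dots> \<le> card A" using assms(1) by (intro card_mono) auto
  finally show ?thesis .
qed

lemma Plus_vimage_Inl_Inr: "Inl -` S <+> Inr -` S = S"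
proof (rule set_eqI)
  fix v show "v \<in> Inl -` S <+> Inr -` S \<longleftrightarrow> v \<in> S" by (cases v) auto
qed

lemma automorphism_complete_iff: "automorphism V K_edge f \<longleftrightarrow> bij_betw f V V"
  unfolding automorphism_def K_edge_def
  by (auto dest: bij_betw_imp_inj_on inj_onD)

lemma fix_number_complete:
  assumes "finite V"
  shows "fix_number V K_edge = card V - 1"
proof -
  obtain v where v: "V \<noteq> {} \<Longrightarrow> v \<in> V" by blast
  show ?thesis
  proof (rule fix_number_eqI)
    show "fixing_set V K_edge (V - {v})"
      unfolding fixing_set_def automorphism_complete_iff
    proof (intro conjI allI impI)
      fix \<sigma> assume "bij_betw \<sigma> V V \<and> (\<forall>x\<in>V - {v}. \<sigma> x = x)"
      then show "\<forall>x\<in>V. \<sigma> x = x"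
        by (intro inj_on_fixes_all_but_one[where a = v]) (auto simp: bij_betw_def)
    qed blast
    show "card (V - {v}) = card V - 1" using assms v by (cases "V = {}") auto
  next
    fix S assume fs: "fixing_set V K_edge S"
    have "a = b" if ab: "a \<in> V - S" "b \<in> V - S" for a b
    proof -
      have "automorphism V K_edge (transpose a b)"
        using ab by (simp add: automorphism_complete_iff)
      moreover have "\<forall>x\<in>S. transpose a b x = x" using ab by (auto simp: transpose_def)
      ultimately have "transpose a b a = a" using fs ab unfolding fixing_set_def by blast
      then show ?thesis by simp
    qed
    then have "card (V - S) \<le> 1"
      unfolding One_nat_def card_le_Suc0_iff_eq[OF finite_Diff[OF assms(1)]] by blast
    moreover have "card V = card (V \<inter> S) + card (V - S)" using assms(1) by (rule card_Int_Diff)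
    moreover have "V \<inter> S = S" using fs by (auto simp: fixing_set_def)
    ultimately show "card V - 1 \<le> card S" by simp
  qed
qed

lemma fg_verts_eq_Plus: "fg_verts V = V <+> V"
  by (simp add: fg_verts_def Plus_def)

lemma automorphism_functigraph_map_sum:
  assumes \<alpha>: "automorphism V E \<alpha>" and \<beta>: "automorphism V E \<beta>" and gV: "g ` V \<subseteq> V"
    and comm: "\<And>x. x \<in> V \<Longrightarrow> \<beta> (g x) = g (\<alpha> x)"
  shows "automorphism (fg_verts V) (fg_edge E g) (map_sum \<alpha> \<beta>)"
proof -
  have bij: "bij_betw \<alpha> V V" "bij_betw \<beta> V V" using \<alpha> \<beta> by (auto simp: automorphism_def)
  have "inj_on (map_sum \<alpha> \<beta>) (V <+> V)"
  proof (rule inj_onI)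
    fix v w assume "v \<in> V <+> V" "w \<in> V <+> V" "map_sum \<alpha> \<beta> v = map_sum \<alpha> \<beta> w"
    then show "v = w"
      using bij_betw_imp_inj_on[OF bij(1)] bij_betw_imp_inj_on[OF bij(2)]
      by (cases v; cases w) (auto dest: inj_onD)
  qed
  moreover have "map_sum \<alpha> \<beta> ` (V <+> V) = Inl ` \<alpha> ` V \<union> Inr ` \<beta> ` V"
    by (simp add: Plus_def image_Un image_image)
  then have "map_sum \<alpha> \<beta> ` (V <+> V) = V <+> V"
    unfolding bij_betw_imp_surj_on[OF bij(1)] bij_betw_imp_surj_on[OF bij(2)] Plus_def .
  ultimately have "bij_betw (map_sum \<alpha> \<beta>) (V <+> V) (V <+> V)" by (simp add: bij_betw_def)
  moreover have "fg_edge E g v w \<longleftrightarrow> fg_edge E g (map_sum \<alpha> \<beta> v) (map_sum \<alpha> \<beta> w)"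
    if "v \<in> V <+> V" "w \<in> V <+> V" for v w
  proof -
    have cross: "y = g x \<longleftrightarrow> \<beta> y = g (\<alpha> x)" if "x \<in> V" "y \<in> V" for x y
    proof -
      have "g x \<in> V" using that gV by auto
      then have "y = g x \<longleftrightarrow> \<beta> y = \<beta> (g x)"
        using inj_on_eq_iff[OF bij_betw_imp_inj_on[OF bij(2)]] that by blast
      then show ?thesis using comm that by simp
    qed
    show ?thesis
      using that \<alpha> \<beta> cross by (cases v; cases w) (auto simp: automorphism_def)
  qed
  ultimately show ?thesis by (simp add: automorphism_def fg_verts_eq_Plus)
qed

lemma fixing_set_fixes_map_sum:
  assumes fs: "fixing_set (fg_verts V) (fg_edge E g) S"
    and aut: "automorphism (fg_verts V) (fg_edge E g) (map_sum \<alpha> \<beta>)"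
    and "\<And>x. Inl x \<in> S \<Longrightarrow> \<alpha> x = x" "\<And>y. Inr y \<in> S \<Longrightarrow> \<beta> y = y"
    and "x \<in> V"
  shows "\<alpha> x = x \<and> \<beta> x = x"
proof -
  have "\<forall>v\<in>S. map_sum \<alpha> \<beta> v = v"
  proof
    fix v assume "v \<in> S"
    then show "map_sum \<alpha> \<beta> v = v" using assms(3,4) by (cases v) auto
  qed
  then have fixed: "\<forall>v\<in>fg_verts V. map_sum \<alpha> \<beta> v = v" using fs aut unfolding fixing_set_def by blast
  have "Inl x \<in> fg_verts V" "Inr x \<in> fg_verts V" using \<open>x \<in> V\<close> by (auto simp: fg_verts_def)
  then show ?thesis using fixed by (metis map_sum.simps sum.inject)
qed

lemma automorphism_complete_functigraph:
  assumes "bij_betw \<alpha> V V" "bij_betw \<beta> V V" "g ` V \<subseteq> V" "\<And>x. x \<in> V \<Longrightarrow> \<beta> (g x) = g (\<alpha> x)"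
  shows "automorphism (fg_verts V) (fg_edge K_edge g) (map_sum \<alpha> \<beta>)"
  using assms by (intro automorphism_functigraph_map_sum) (simp_all add: automorphism_complete_iff)

lemma inj_on_unfixed_first_copy:
  assumes fs: "fixing_set (fg_verts V) (fg_edge K_edge g) S" and gV: "g ` V \<subseteq> V"
  shows "inj_on g (V - Inl -` S)"
proof (rule inj_onI)
  fix a b assume a: "a \<in> V - Inl -` S" and b: "b \<in> V - Inl -` S" and "g a = g b"
  then have "\<forall>x\<in>V. g (transpose a b x) = g x" by (simp add: transpose_def)
  then have aut: "automorphism (fg_verts V) (fg_edge K_edge g) (map_sum (transpose a b) id)"
    using a b gV by (intro automorphism_complete_functigraph) auto
  have "transpose a b a = a \<and> id a = a"
    by (rule fixing_set_fixes_map_sum[OF fs aut]) (use a b in \<open>auto simp: transpose_def\<close>)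
  then show "a = b" by simp
qed

lemma card_fixing_set_nonimage_ge:
  assumes fs: "fixing_set (fg_verts V) (fg_edge K_edge g) S" and gV: "g ` V \<subseteq> V" and "finite V"
  shows "card (V - g ` V) - 1 \<le> card (Inr -` S \<inter> (V - g ` V))"
proof -
  have "a = b" if a: "a \<in> V - g ` V - Inr -` S" and b: "b \<in> V - g ` V - Inr -` S" for a b
  proof -
    have "transpose a b (g x) = g x" if "x \<in> V" for x
    proof -
      have "g x \<noteq> a" "g x \<noteq> b" using a b that by auto
      then show ?thesis by simp
    qed
    then have aut: "automorphism (fg_verts V) (fg_edge K_edge g) (map_sum id (transpose a b))"
      using a b gV by (intro automorphism_complete_functigraph) auto
    have "id a = a \<and> transpose a b a = a"
      by (rule fixing_set_fixes_map_sum[OF fs aut]) (use a b in \<open>auto simp: transpose_def\<close>)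
    then show "a = b" by simp
  qed
  then have "card (V - g ` V - Inr -` S) \<le> 1"
    unfolding One_nat_def card_le_Suc0_iff_eq[OF finite_Diff[OF finite_Diff[OF \<open>finite V\<close>]]] by blast
  moreover have "card (V - g ` V) = card ((V - g ` V) \<inter> Inr -` S) + card (V - g ` V - Inr -` S)"
    using \<open>finite V\<close> by (simp add: card_Int_Diff)
  ultimately show ?thesis by (simp add: Int_commute)
qed

lemma card_fixing_set_injective_points_ge:
  assumes fs: "fixing_set (fg_verts V) (fg_edge K_edge g) S" and gV: "g ` V \<subseteq> V" and "finite V"
    and U: "U \<subseteq> V" "\<And>x z. x \<in> U \<Longrightarrow> z \<in> V \<Longrightarrow> g z = g x \<Longrightarrow> z = x"
  shows "card U - 1 \<le> card (Inl -` S \<inter> U) + card (Inr -` S \<inter> g ` U)"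
proof -
  have unique: "a = b" if a: "a \<in> U" "Inl a \<notin> S" "Inr (g a) \<notin> S" and b: "b \<in> U" "Inl b \<notin> S" "Inr (g b) \<notin> S"
    for a b
  proof (rule ccontr)
    assume "a \<noteq> b"
    have "a \<in> V" "b \<in> V" "g a \<in> V" "g b \<in> V" using a(1) b(1) U(1) gV by auto
    have "transpose (g a) (g b) (g x) = g (transpose a b x)" if "x \<in> V" for x
      using that U a(1) b(1) by (cases "x = a \<or> x = b") (auto simp: transpose_def)
    then have aut: "automorphism (fg_verts V) (fg_edge K_edge g) (map_sum (transpose a b) (transpose (g a) (g b)))"
      using \<open>a \<in> V\<close> \<open>b \<in> V\<close> \<open>g a \<in> V\<close> \<open>g b \<in> V\<close> gV
      by (intro automorphism_complete_functigraph) auto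
    have "transpose a b a = a \<and> transpose (g a) (g b) a = a"
      by (rule fixing_set_fixes_map_sum[OF fs aut]) (use a b \<open>a \<in> V\<close> in \<open>auto simp: transpose_def\<close>)
    then show False using \<open>a \<noteq> b\<close> by simp
  qed
  define Free where "Free = {x\<in>U. Inl x \<notin> S \<and> Inr (g x) \<notin> S}"
  have finU: "finite U" using U(1) \<open>finite V\<close> finite_subset by auto
  have "U = (Inl -` S \<inter> U) \<union> (U \<inter> g -` Inr -` S) \<union> Free" by (auto simp: Free_def)
  then have "card U \<le> card (Inl -` S \<inter> U \<union> U \<inter> g -` Inr -` S) + card Free" by (metis card_Un_le)
  moreover have "finite Free" using finU by (simp add: Free_def)
  then have "card Free \<le> 1" unfolding One_nat_def card_le_Suc0_iff_eq[OF \<open>finite Free\<close>]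
    unfolding Free_def using unique by blast
  moreover have "card (Inl -` S \<inter> U \<union> U \<inter> g -` Inr -` S)
      \<le> card (Inl -` S \<inter> U) + card (U \<inter> g -` Inr -` S)" by (rule card_Un_le)
  moreover have "card (U \<inter> g -` Inr -` S) \<le> card (Inr -` S \<inter> g ` U)"
    using U finU by (intro card_inj_on_le[where f = g]) (auto intro: inj_onI)
  ultimately show ?thesis by linarith
qed

lemma card_fixing_set_first_copy_ge:
  assumes fs: "fixing_set (fg_verts V) (fg_edge K_edge g) S" and gV: "g ` V \<subseteq> V" and fin: "finite V"
    and U: "U \<subseteq> V" "\<And>x z. x \<in> U \<Longrightarrow> z \<in> V \<Longrightarrow> g z = g x \<Longrightarrow> z = x"
  shows "card V - card (g ` V) \<le> card (Inl -` S \<inter> (V - U))"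
proof -
  have finU: "finite U" using U(1) fin finite_subset by auto
  have "g ` V = g ` (V - U) \<union> g ` U" "g ` (V - U) \<inter> g ` U = {}" using U by auto
  then have "card (g ` V) = card (g ` (V - U)) + card (g ` U)"
    using fin finU by (simp add: card_Un_disjoint)
  also have "card (g ` U) = card U" using U by (intro card_image inj_onI) auto
  finally have "card (g ` V) = card (g ` (V - U)) + card U" .
  moreover have "card (V - U - Inl -` S) \<le> card (g ` (V - U))"
    using inj_on_unfixed_first_copy[OF fs gV] fin
    by (intro card_inj_on_le[where f = g]) (auto intro: inj_on_subset)
  moreover have "card (V - U) = card ((V - U) \<inter> Inl -` S) + card (V - U - Inl -` S)"
    using fin by (simp add: card_Int_Diff)
  moreover have "card (V - U) = card V - card U" "card U \<le> card V"
    using U(1) fin finU by (simp_all add: card_Diff_subset card_mono)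
  ultimately show ?thesis by (simp add: Int_commute)
qed

lemma card_functigraph_fixing_set_ge:
  assumes fs: "fixing_set (fg_verts V) (fg_edge K_edge g) S" and gV: "g ` V \<subseteq> V" and fin: "finite V"
    and U: "U \<subseteq> V" "\<And>x z. x \<in> U \<Longrightarrow> z \<in> V \<Longrightarrow> g z = g x \<Longrightarrow> z = x"
  shows "(card V - card (g ` V)) + (card (V - g ` V) - 1) + (card U - 1) \<le> card S"
proof -
  have "S \<subseteq> V <+> V" using fs by (simp add: fixing_set_def fg_verts_eq_Plus)
  then have "Inl -` S \<subseteq> V" "Inr -` S \<subseteq> V" by auto
  then have finL: "finite (Inl -` S)" and finR: "finite (Inr -` S)" using fin by (auto intro: finite_subset)
  have "card (Inl -` S \<inter> (V - U)) + card (Inl -` S \<inter> U) \<le> card (Inl -` S)"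
    using finL by (intro card_Int_add_card_Int_le) auto
  moreover have "card (Inr -` S \<inter> (V - g ` V)) + card (Inr -` S \<inter> g ` U) \<le> card (Inr -` S)"
    using finR U(1) by (intro card_Int_add_card_Int_le) auto
  moreover have "card S = card (Inl -` S) + card (Inr -` S)"
    using finL finR card_Plus Plus_vimage_Inl_Inr by metis
  ultimately show ?thesis
    using card_fixing_set_first_copy_ge[OF assms] card_fixing_set_nonimage_ge[OF fs gV fin]
      card_fixing_set_injective_points_ge[OF assms] by linarith
qed

lemma automorphism_functigraph_split:
  assumes aut: "automorphism (fg_verts V) (fg_edge K_edge g) \<sigma>" and gV: "g ` V \<subseteq> V"
    and r: "r \<in> V" "r \<notin> g ` V" "\<sigma> (Inr r) = Inr r"
  obtains \<pi> \<tau> where "\<And>x. x \<in> V \<Longrightarrow> \<sigma> (Inl x) = Inl (\<pi> x)" "\<And>y. y \<in> V \<Longrightarrow> \<sigma> (Inr y) = Inr (\<tau> y)"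
    "inj_on \<pi> V" "\<pi> ` V \<subseteq> V" "inj_on \<tau> V" "\<tau> ` V \<subseteq> V" "\<And>x. x \<in> V \<Longrightarrow> \<tau> (g x) = g (\<pi> x)"
proof -
  let ?F = "fg_verts V" and ?E = "fg_edge K_edge g"
  have bij: "bij_betw \<sigma> ?F ?F" and adj: "\<And>v w. v \<in> ?F \<Longrightarrow> w \<in> ?F \<Longrightarrow> ?E v w \<longleftrightarrow> ?E (\<sigma> v) (\<sigma> w)"
    using aut by (auto simp: automorphism_def)
  have inj: "inj_on \<sigma> ?F" and maps: "\<And>v. v \<in> ?F \<Longrightarrow> \<sigma> v \<in> ?F"
    using bij by (auto simp: bij_betw_def)
  have rF: "Inr r \<in> ?F" using r by (simp add: fg_verts_def)
  have nbr: "?E v (Inr r) \<longleftrightarrow> (\<exists>y. v = Inr y \<and> y \<noteq> r)" if "v \<in> ?F" for v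
    using that r(2) by (auto simp: fg_verts_def K_edge_def)
  have left: "\<sigma> (Inl x) \<in> Inl ` V" if x: "x \<in> V" for x
  proof -
    have xF: "Inl x \<in> ?F" using x by (simp add: fg_verts_def)
    have "\<not> ?E (Inl x) (Inr r)" using x r(2) by auto
    then have "\<not> ?E (\<sigma> (Inl x)) (Inr r)" using adj[OF xF rF] r(3) by simp
    moreover have "\<sigma> (Inl x) \<noteq> Inr r" using inj xF rF r(3) by (metis inj_onD sum.distinct(1))
    ultimately show ?thesis using maps[OF xF] nbr[OF maps[OF xF]] by (auto simp: fg_verts_def)
  qed
  have right: "\<sigma> (Inr y) \<in> Inr ` V" if y: "y \<in> V" for y
  proof (cases "y = r")
    case False
    have yF: "Inr y \<in> ?F" using y by (simp add: fg_verts_def)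
    have "?E (Inr y) (Inr r)" using False by (simp add: K_edge_def)
    then have "?E (\<sigma> (Inr y)) (Inr r)" using adj[OF yF rF] r(3) by simp
    then show ?thesis using maps[OF yF] nbr[OF maps[OF yF]] by (auto simp: fg_verts_def)
  qed (use r in auto)
  define \<pi> where "\<pi> x = projl (\<sigma> (Inl x))" for x
  define \<tau> where "\<tau> y = projr (\<sigma> (Inr y))" for y
  have \<pi>: "\<sigma> (Inl x) = Inl (\<pi> x)" "\<pi> x \<in> V" if "x \<in> V" for x
    using left[OF that] by (auto simp: \<pi>_def)
  have \<tau>: "\<sigma> (Inr y) = Inr (\<tau> y)" "\<tau> y \<in> V" if "y \<in> V" for y
    using right[OF that] by (auto simp: \<tau>_def)
  show ?thesis
  proof
    show "inj_on \<pi> V"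
    proof (rule inj_onI)
      fix x y assume "x \<in> V" "y \<in> V" "\<pi> x = \<pi> y"
      then have "\<sigma> (Inl x) = \<sigma> (Inl y)" "Inl x \<in> ?F" "Inl y \<in> ?F" using \<pi>(1) by (auto simp: fg_verts_def)
      then show "x = y" using inj_onD[OF inj] by blast
    qed
    show "inj_on \<tau> V"
    proof (rule inj_onI)
      fix x y assume "x \<in> V" "y \<in> V" "\<tau> x = \<tau> y"
      then have "\<sigma> (Inr x) = \<sigma> (Inr y)" "Inr x \<in> ?F" "Inr y \<in> ?F" using \<tau>(1) by (auto simp: fg_verts_def)
      then show "x = y" using inj_onD[OF inj] by blast
    qed
    show "\<tau> (g x) = g (\<pi> x)" if x: "x \<in> V" for x
    proof -
      have "?E (Inl x) (Inr (g x))" by simp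
      moreover have "Inl x \<in> ?F" "Inr (g x) \<in> ?F" using x gV by (auto simp: fg_verts_def)
      moreover have "g x \<in> V" using x gV by auto
      ultimately show ?thesis using adj \<pi>(1)[OF x] \<tau>(1)[of "g x"] by fastforce
    qed
  qed (use \<pi> \<tau> in auto)
qed

text \<open>A fixed non-image vertex \<open>r\<close> splits an automorphism into \<open>(\<pi>, \<tau>)\<close> with
  \<open>\<tau> \<circ> g = g \<circ> \<pi>\<close>; the set pins \<open>\<tau>\<close> outside \<open>{n, g a}\<close>, which pins \<open>\<pi>\<close> outside \<open>a\<close>,
  and the two stragglers follow because an injection fixing all but one point fixes that point too.\<close>

lemma fixing_set_functigraphI:
  assumes gV: "g ` V \<subseteq> V" and SL: "SL \<subseteq> V" and SR: "SR \<subseteq> V"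
    and r: "r \<in> SR" "r \<notin> g ` V"
    and inj: "inj_on g (V - SL)"
    and a: "a \<in> V" "\<And>z. z \<in> V \<Longrightarrow> g z = g a \<Longrightarrow> z = a"
    and n: "n \<notin> g ` V"
    and cover: "V - (SR \<union> g ` SL) \<subseteq> {n, g a}"
  shows "fixing_set (fg_verts V) (fg_edge K_edge g) (SL <+> SR)"
  unfolding fixing_set_def
proof (intro conjI allI impI)
  show "SL <+> SR \<subseteq> fg_verts V" using SL SR by (auto simp: fg_verts_eq_Plus)
  fix \<sigma> assume \<sigma>: "automorphism (fg_verts V) (fg_edge K_edge g) \<sigma> \<and> (\<forall>v\<in>SL <+> SR. \<sigma> v = v)"
  have fixL: "\<sigma> (Inl x) = Inl x" if "x \<in> SL" for x using \<sigma> that by auto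
  have fixR: "\<sigma> (Inr y) = Inr y" if "y \<in> SR" for y using \<sigma> that by auto
  obtain \<pi> \<tau> where \<sigma>L: "\<And>x. x \<in> V \<Longrightarrow> \<sigma> (Inl x) = Inl (\<pi> x)"
    and \<sigma>R: "\<And>y. y \<in> V \<Longrightarrow> \<sigma> (Inr y) = Inr (\<tau> y)"
    and \<pi>: "inj_on \<pi> V" "\<pi> ` V \<subseteq> V" and \<tau>: "inj_on \<tau> V" "\<tau> ` V \<subseteq> V"
    and comm: "\<And>x. x \<in> V \<Longrightarrow> \<tau> (g x) = g (\<pi> x)"
    by (rule automorphism_functigraph_split[OF conjunct1[OF \<sigma>] gV subsetD[OF SR r(1)] r(2) fixR[OF r(1)]]) blast
  have \<pi>SL: "\<pi> x = x" if "x \<in> SL" for x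
    using fixL[OF that] \<sigma>L[OF subsetD[OF SL that]] by simp
  have \<tau>SR: "\<tau> y = y" if "y \<in> SR" for y
    using fixR[OF that] \<sigma>R[OF subsetD[OF SR that]] by simp
  have \<tau>_off: "\<tau> y = y" if "y \<in> V" "y \<noteq> n" "y \<noteq> g a" for y
  proof -
    have "y \<in> SR \<union> g ` SL" using cover that by blast
    then show ?thesis using \<tau>SR comm \<pi>SL SL by auto
  qed
  have \<pi>_off: "\<pi> x = x" if x: "x \<in> V" "x \<noteq> a" for x
  proof (cases "x \<in> SL")
    case False
    have \<pi>x: "\<pi> x \<in> V" using \<pi>(2) x(1) by blast
    have "\<pi> x \<notin> SL"
    proof
      assume "\<pi> x \<in> SL"
      then have "\<pi> (\<pi> x) = \<pi> x" by (rule \<pi>SL)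
      then have "\<pi> x = x" using inj_onD[OF \<pi>(1) _ \<pi>x x(1)] by blast
      with False \<open>\<pi> x \<in> SL\<close> show False by simp
    qed
    moreover have "g x \<in> V" "g x \<noteq> n" "g x \<noteq> g a" using x gV n a(2) by auto
    then have "g (\<pi> x) = g x" using comm[OF x(1)] \<tau>_off by simp
    ultimately show ?thesis using inj_onD[OF inj] False x(1) \<pi>x by blast
  qed (rule \<pi>SL)
  have \<pi>_id: "\<forall>x\<in>V. \<pi> x = x" using inj_on_fixes_all_but_one[OF \<pi> \<pi>_off] .
  have "\<tau> y = y" if "y \<in> V" "y \<noteq> n" for y
  proof (cases "y = g a")
    case True
    then show ?thesis using comm[OF a(1)] \<pi>_id a(1) by simp
  qed (use \<tau>_off that in auto)
  then have \<tau>_id: "\<forall>y\<in>V. \<tau> y = y" using inj_on_fixes_all_but_one[OF \<tau>] by blast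
  show "\<forall>v\<in>fg_verts V. \<sigma> v = v"
  proof
    fix v assume "v \<in> fg_verts V"
    then show "\<sigma> v = v" using \<sigma>L \<sigma>R \<pi>_id \<tau>_id by (auto simp: fg_verts_def)
  qed
qed

lemma fix_number_functigraph_ge:
  assumes "finite V" "g ` V \<subseteq> V"
  shows "2 * (card V - card (g ` V)) - 1 \<le> fix_number (fg_verts V) (fg_edge K_edge g)"
proof (rule fix_number_geI)
  fix S assume "fixing_set (fg_verts V) (fg_edge K_edge g) S"
  from card_functigraph_fixing_set_ge[OF this assms(2,1), of "{}"]
  have "(card V - card (g ` V)) + (card (V - g ` V) - 1) \<le> card S" by simp
  moreover have "card (V - g ` V) = card V - card (g ` V)"
    using assms by (simp add: card_Diff_subset)
  ultimately show "2 * (card V - card (g ` V)) - 1 \<le> card S" by linarith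
qed

text \<open>For \<open>2 \<le> p \<le> s\<close> on \<open>{0..<s+p}\<close>: the fibres are \<open>{0,1,2}\<close>, \<open>{y+2, y+p}\<close> for
  \<open>1 \<le> y \<le> p-2\<close>, and \<open>{y+p}\<close> for \<open>p-1 \<le> y < s\<close>; so the lower bound of
  \<open>card_functigraph_fixing_set_ge\<close> (with \<open>U = {2p-1..<s+p}\<close>) is exactly \<open>s + p - 1\<close>.\<close>

definition witness_map :: "nat \<Rightarrow> nat \<Rightarrow> nat" where
  "witness_map p x = (if x \<le> 2 then 0 else if x \<le> p then x - 2 else x - p)"

lemma witness_map_image:
  assumes "2 \<le> p" "p \<le> s"
  shows "witness_map p ` {0..<s+p} = {0..<s}"
proof
  show "witness_map p ` {0..<s+p} \<subseteq> {0..<s}" using assms by (auto simp: witness_map_def)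
  show "{0..<s} \<subseteq> witness_map p ` {0..<s+p}"
  proof
    fix y assume y: "y \<in> {0..<s}"
    have "y = witness_map p (if y = 0 then 0 else y + p)" using assms by (auto simp: witness_map_def)
    then show "y \<in> witness_map p ` {0..<s+p}" using y by auto
  qed
qed

lemma witness_map_injective_points:
  assumes "2 \<le> p" "x \<in> {2*p-1..<s+p}" "witness_map p z = witness_map p x"
  shows "z = x"
  using assms by (auto simp: witness_map_def split: if_splits)

lemma fixing_set_witness_map:
  assumes p: "2 \<le> p" "p \<le> s"
  shows "fixing_set (fg_verts {0..<s+p}) (fg_edge K_edge (witness_map p))
           (({1,2} \<union> ({p+1..<s+p} - {2*p-1})) <+> {s+1..<s+p})"
proof (rule fixing_set_functigraphI[where r = "s+p-1" and a = "2*p-1" and n = s])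
  let ?g = "witness_map p" and ?SL = "{1,2} \<union> ({p+1..<s+p} - {2*p-1})"
  have "inj_on ?g ({0} \<union> {3..p} \<union> {2*p-1})"
    using p by (auto simp: inj_on_def witness_map_def)
  then show "inj_on ?g ({0..<s+p} - ?SL)" by (rule inj_on_subset) auto
  have ga: "?g (2*p-1) = p - 1" using p by (simp add: witness_map_def)
  show "{0..<s+p} - ({s+1..<s+p} \<union> ?g ` ?SL) \<subseteq> {s, ?g (2*p-1)}"
  proof
    fix y assume y: "y \<in> {0..<s+p} - ({s+1..<s+p} \<union> ?g ` ?SL)"
    show "y \<in> {s, ?g (2*p-1)}"
    proof (rule ccontr)
      assume "y \<notin> {s, ?g (2*p-1)}"
      then have "y \<noteq> s" "y \<noteq> p - 1" using ga by auto
      then have "y < s" "y \<noteq> p - 1" using y by auto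
      then have "y = ?g (if y = 0 then 1 else y + p)" "(if y = 0 then 1 else y + p) \<in> ?SL"
        using p by (auto simp: witness_map_def)
      then show False using y by blast
    qed
  qed
  show "\<And>z. z \<in> {0..<s+p} \<Longrightarrow> ?g z = ?g (2*p-1) \<Longrightarrow> z = 2*p-1"
    using witness_map_injective_points[OF p(1), of "2*p-1" s] p by auto
qed (use p in \<open>auto simp: witness_map_image[OF p]\<close>)

lemma card_fixing_set_witness_map:
  assumes "2 \<le> p" "p \<le> s"
  shows "card (({1,2} \<union> ({p+1..<s+p} - {2*p-1})) <+> {s+1..<s+p}) = s + p - 1"
proof -
  have "2*p-1 \<in> {p+1..<s+p}" using assms by auto
  then have "card ({p+1..<s+p} - {2*p-1}) = s - 2" using assms by (simp add: card_Diff_singleton)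
  moreover have "card ({1::nat,2} \<union> ({p+1..<s+p} - {2*p-1})) = 2 + card ({p+1..<s+p} - {2*p-1})"
    using assms by (subst card_Un_disjoint) auto
  ultimately show ?thesis using assms by (simp add: card_Plus)
qed

lemma fix_number_functigraph_witness_map:
  assumes p: "2 \<le> p" "p \<le> s"
  shows "fix_number (fg_verts {0..<s+p}) (fg_edge K_edge (witness_map p)) = s + p - 1"
proof (rule fix_number_eqI[OF fixing_set_witness_map[OF p] card_fixing_set_witness_map[OF p]])
  fix S assume fs: "fixing_set (fg_verts {0..<s+p}) (fg_edge K_edge (witness_map p)) S"
  have img: "witness_map p ` {0..<s+p} = {0..<s}" by (rule witness_map_image[OF p])
  have "(card {0..<s+p} - card (witness_map p ` {0..<s+p}))
      + (card ({0..<s+p} - witness_map p ` {0..<s+p}) - 1) + (card {2*p-1..<s+p} - 1) \<le> card S"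
    by (rule card_functigraph_fixing_set_ge[OF fs])
      (use img witness_map_injective_points[OF p(1)] in auto)
  moreover have "card ({0..<s+p} - {0..<s}) = p" by (simp add: card_Diff_subset)
  ultimately show "s + p - 1 \<le> card S" using p by (simp add: img)
qed

lemma fix_number_K_verts: "fix_number (K_verts m) K_edge = m - 1"
  by (simp add: K_verts_def fix_number_complete)

lemma le_double_if_fix_number_functigraph_eq:
  assumes gV: "g ` K_verts m \<subseteq> K_verts m" and card: "card (g ` K_verts m) = s"
    and eq: "fix_number (K_verts m) K_edge = fix_number (fg_verts (K_verts m)) (fg_edge K_edge g)"
  shows "m \<le> 2 * s"
proof -
  have "2 * (m - s) - 1 \<le> fix_number (fg_verts (K_verts m)) (fg_edge K_edge g)"
    using fix_number_functigraph_ge[OF _ gV] card by (simp add: K_verts_def)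
  also have "\<dots> = m - 1" using eq by (simp add: fix_number_K_verts)
  finally show ?thesis by arith
qed

lemma fix_number_functigraph_eq_witness:
  assumes "s + 2 \<le> m" "m \<le> 2 * s"
  shows "\<exists>g. g ` K_verts m \<subseteq> K_verts m \<and> card (g ` K_verts m) = s \<and>
           fix_number (K_verts m) K_edge = fix_number (fg_verts (K_verts m)) (fg_edge K_edge g)"
proof (intro exI conjI)
  define p where "p = m - s"
  have p: "2 \<le> p" "p \<le> s" and V: "K_verts m = {0..<s+p}"
    using assms by (auto simp: p_def K_verts_def)
  show "witness_map p ` K_verts m \<subseteq> K_verts m" "card (witness_map p ` K_verts m) = s"
    unfolding V witness_map_image[OF p] by auto
  show "fix_number (K_verts m) K_edge = fix_number (fg_verts (K_verts m)) (fg_edge K_edge (witness_map p))"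
    unfolding V fix_number_functigraph_witness_map[OF p] by (simp add: fix_number_complete)
qed

theorem proposition3p5:
  fixes s :: nat
  assumes "s \<ge> 2"
  shows "let M = {m. m \<ge> s + 2 \<and>
              (\<exists>g. g ` K_verts m \<subseteq> K_verts m \<and> card (g ` K_verts m) = s \<and>
                   fix_number (K_verts m) K_edge =
                   fix_number (fg_verts (K_verts m)) (fg_edge K_edge g))}
         in card M = s - 1 \<and> M = {s + 2 .. 2 * s}"
proof -
  have "{m. m \<ge> s + 2 \<and>
          (\<exists>g. g ` K_verts m \<subseteq> K_verts m \<and> card (g ` K_verts m) = s \<and>
               fix_number (K_verts m) K_edge = fix_number (fg_verts (K_verts m)) (fg_edge K_edge g))}
      = {s + 2 .. 2 * s}"
    using le_double_if_fix_number_functigraph_eq fix_number_functigraph_eq_witness by fastforce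
  then show ?thesis using assms by (simp add: Let_def)
qed

end
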